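(* For every connected graph $G$ of order $n$, $\chi_{\mu_2}(G)\le \lceil n/2\rceil$. Moreover, this bound is sharp, i.e., there are connected graphs attaining equality.
   Context: A $u,v$-geodesic is a shortest $u,v$-path. A set $M\subseteq V(G)$ is a $2$-distance mutual-visibility set if for every two vertices $u,v\in M$ there exists a $u,v$-geodesic of length at most $2$ none of whose internal vertices lies in $M$. $\chi_{\mu_2}(G)$ is the minimum cardinality of a partition of $V(G)$ into $2$-distance mutual-visibility sets. *)

theory Defs
  imports Complex_Main "HOL-Library.Disjoint_Sets"
begin

definition graph :: "'a set \<Rightarrow> ('a \<Rightarrow> 'a \<Rightarrow> bool) \<Rightarrow> bool" where
  "graph V E \<longleftrightarrow> finite V \<and> (\<forall>u v. E u v \<longrightarrow> u \<in> V \<and> v \<in> V)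
     \<and> (\<forall>u v. E u v \<longrightarrow> E v u) \<and> (\<forall>u. \<not> E u u)"

text \<open>A u,v-path given as its list of vertices (length of the path = length p - 1).\<close>
definition is_path :: "'a set \<Rightarrow> ('a \<Rightarrow> 'a \<Rightarrow> bool) \<Rightarrow> 'a list \<Rightarrow> 'a \<Rightarrow> 'a \<Rightarrow> bool" where
  "is_path V E p u v \<longleftrightarrow> p \<noteq> [] \<and> hd p = u \<and> last p = v \<and> set p \<subseteq> V \<and> distinct p
     \<and> (\<forall>i. Suc i < length p \<longrightarrow> E (p ! i) (p ! Suc i))"

definition connected_graph :: "'a set \<Rightarrow> ('a \<Rightarrow> 'a \<Rightarrow> bool) \<Rightarrow> bool" where
  "connected_graph V E \<longleftrightarrow> (\<forall>u\<in>V. \<forall>v\<in>V. \<exists>p. is_path V E p u v)"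

definition geodesic :: "'a set \<Rightarrow> ('a \<Rightarrow> 'a \<Rightarrow> bool) \<Rightarrow> 'a list \<Rightarrow> 'a \<Rightarrow> 'a \<Rightarrow> bool" where
  "geodesic V E p u v \<longleftrightarrow> is_path V E p u v \<and> (\<forall>q. is_path V E q u v \<longrightarrow> length p \<le> length q)"

definition internal :: "'a list \<Rightarrow> 'a set" where
  "internal p = set (butlast (tl p))"

definition dmv2_set :: "'a set \<Rightarrow> ('a \<Rightarrow> 'a \<Rightarrow> bool) \<Rightarrow> 'a set \<Rightarrow> bool" where
  "dmv2_set V E M \<longleftrightarrow> M \<subseteq> V \<and>
     (\<forall>u\<in>M. \<forall>v\<in>M. u \<noteq> v \<longrightarrow>
        (\<exists>p. geodesic V E p u v \<and> length p - 1 \<le> 2 \<and> internal p \<inter> M = {}))"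

definition chi_mu2 :: "'a set \<Rightarrow> ('a \<Rightarrow> 'a \<Rightarrow> bool) \<Rightarrow> nat" where
  "chi_mu2 V E = (LEAST k. \<exists>P. partition_on V P \<and> (\<forall>M\<in>P. dmv2_set V E M) \<and> card P = k)"

end

theory Submission
  imports Defs
begin

(* Two vertices at distance at most two are joined by a geodesic of length at most two whose
   internal vertex, if any, lies outside the pair, so every block of at most two vertices at
   distance at most two is a 2-distance mutual-visibility set.  In a connected graph
   take a spanning tree and a parent p of maximal depth: the children of p are leaves, so two
   children of p, or p together with its only child, form such a block, and removing it leaves
   a spanning tree of the remaining vertices.  Repeating this pairs off all vertices but at most
   one, whence the bound.  On the path 0 - 1 - ... - (n-1) a 2-distance mutual-visibility set has
   at most two vertices: of three vertices the outer two are at distance at most two only if the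
   third lies strictly between them, where it blocks the unique short geodesic. *)

definition close_block :: "('a \<Rightarrow> 'a \<Rightarrow> bool) \<Rightarrow> 'a set \<Rightarrow> bool" where
  "close_block E M \<longleftrightarrow> (\<exists>a b. M = {a, b} \<and> (a = b \<or> E a b \<or> (\<exists>w. E a w \<and> E w b)))"

lemma is_path_length_ge_2:
  assumes "is_path V E p u v" "u \<noteq> v"
  shows "2 \<le> length p"
  using assms unfolding is_path_def by (cases p; cases "tl p") auto

lemma is_path_length_ge_3:
  assumes "is_path V E p u v" "u \<noteq> v" "\<not> E u v"
  shows "3 \<le> length p"
  using assms unfolding is_path_def
  by (cases p; cases "tl p"; cases "tl (tl p)") (auto dest: spec[of _ 0])

lemma geodesic_edge:
  assumes "graph V E" "E u v"
  shows "geodesic V E [u, v] u v"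
proof -
  have "u \<noteq> v" "u \<in> V" "v \<in> V" using assms unfolding graph_def by metis+
  then have "is_path V E [u, v] u v"
    using assms(2) unfolding is_path_def by (auto simp: less_Suc_eq)
  with \<open>u \<noteq> v\<close> show ?thesis
    unfolding geodesic_def using is_path_length_ge_2 by fastforce
qed

lemma geodesic_two_steps:
  assumes "graph V E" "E u w" "E w v" "u \<noteq> v" "\<not> E u v"
  shows "geodesic V E [u, w, v] u v"
proof -
  have "u \<noteq> w" "w \<noteq> v" "u \<in> V" "w \<in> V" "v \<in> V"
    using assms unfolding graph_def by metis+
  then have "is_path V E [u, w, v] u v"
    using assms(2-) unfolding is_path_def by (auto simp: less_Suc_eq nth_Cons split: nat.splits)
  with assms(4,5) show ?thesis
    unfolding geodesic_def using is_path_length_ge_3 by fastforce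
qed

lemma dmv2_set_close_block:
  assumes G: "graph V E" and "M \<subseteq> V" and "close_block E M"
  shows "dmv2_set V E M"
  unfolding dmv2_set_def
proof (intro conjI ballI impI)
  show "M \<subseteq> V" by fact
next
  fix u v assume uv: "u \<in> M" "v \<in> M" "u \<noteq> v"
  have sym: "\<And>x y. E x y \<Longrightarrow> E y x" and irrefl: "\<And>x. \<not> E x x"
    using G unfolding graph_def by blast+
  obtain a b where M: "M = {a, b}" and ab: "a = b \<or> E a b \<or> (\<exists>w. E a w \<and> E w b)"
    using \<open>close_block E M\<close> unfolding close_block_def by blast
  have ba: "b = a \<or> E b a \<or> (\<exists>w. E b w \<and> E w a)" using ab sym by blast
  have "{u, v} = {a, b}" using uv M by auto
  then have close: "E u v \<or> (\<exists>w. E u w \<and> E w v)"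
    using ab ba uv(3) by (auto simp: doubleton_eq_iff)
  show "\<exists>p. geodesic V E p u v \<and> length p - 1 \<le> 2 \<and> internal p \<inter> M = {}"
  proof (cases "E u v")
    case True
    then show ?thesis
      using geodesic_edge[OF G] by (intro exI[of _ "[u, v]"]) (auto simp: internal_def)
  next
    case False
    then obtain w where uw: "E u w" and wv: "E w v" using close by blast
    have "w \<notin> M" using M uv uw wv irrefl \<open>{u, v} = {a, b}\<close> by auto
    then show ?thesis
      using geodesic_two_steps[OF G uw wv uv(3) False]
      by (intro exI[of _ "[u, w, v]"]) (auto simp: internal_def)
  qed
qed

text \<open>Parent pointers of a spanning tree of \<open>W\<close> towards the root \<open>r\<close>, the rank \<open>d\<close>
  making it acyclic.  The root need not belong to \<open>W\<close>, so it may be removed like any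
  other vertex.\<close>

definition rooted_parents ::
    "('a \<Rightarrow> 'a \<Rightarrow> bool) \<Rightarrow> 'a \<Rightarrow> ('a \<Rightarrow> 'a) \<Rightarrow> ('a \<Rightarrow> nat) \<Rightarrow> 'a set \<Rightarrow> bool" where
  "rooted_parents E r par d W \<longleftrightarrow> (\<forall>x\<in>W - {r}. par x \<in> W \<and> E x (par x) \<and> d (par x) < d x)"

lemma connected_graph_rooted_parents:
  assumes "connected_graph V E" "r \<in> V"
  obtains par d where "rooted_parents E r par d V"
proof -
  define d where "d x = (LEAST k. \<exists>q. is_path V E q x r \<and> length q = k)" for x
  have "\<exists>y. y \<in> V \<and> E x y \<and> d y < d x" if x: "x \<in> V - {r}" for x
  proof -
    have "\<exists>k q. is_path V E q x r \<and> length q = k"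
      using assms x unfolding connected_graph_def by blast
    then have "\<exists>q. is_path V E q x r \<and> length q = d x"
      unfolding d_def by (rule LeastI_ex)
    then obtain q where q: "is_path V E q x r" "length q = d x" by blast
    have "2 \<le> length q" using is_path_length_ge_2[OF q(1)] x by blast
    then obtain y rest where qq: "q = x # y # rest"
      using q(1) unfolding is_path_def by (cases q; cases "tl q") auto
    have "is_path V E (y # rest) y r"
      using q(1) unfolding qq is_path_def by (auto dest: spec[of _ "Suc i" for i])
    then have "d y \<le> length (y # rest)" unfolding d_def by (intro Least_le) blast
    then have "d y < d x" using q(2) qq by simp
    moreover have "y \<in> V" "E x y"
      using q(1) unfolding qq is_path_def by (auto dest: spec[of _ 0])
    ultimately show ?thesis by blast
  qed
  then obtain par where "\<forall>x\<in>V - {r}. par x \<in> V \<and> E x (par x) \<and> d (par x) < d x"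
    by metis
  then show ?thesis using that unfolding rooted_parents_def by blast
qed

lemma rooted_parents_remove_close_block:
  assumes fin: "finite W" and T: "rooted_parents E r par d W" and "2 \<le> card W"
    and sym: "\<And>x y. E x y \<Longrightarrow> E y x"
  obtains B where "B \<subseteq> W" "card B = 2" "close_block E B" "rooted_parents E r par d (W - B)"
proof -
  define C where "C = W - {r}"
  have T': "\<And>x. x \<in> C \<Longrightarrow> par x \<in> W \<and> E x (par x) \<and> d (par x) < d x"
    using T unfolding rooted_parents_def C_def by blast
  have "C \<noteq> {}" using \<open>2 \<le> card W\<close> card_le_Suc0_iff_eq[OF fin] unfolding C_def by auto
  then have "Max ((d \<circ> par) ` C) \<in> (d \<circ> par) ` C" using fin C_def by (intro Max_in) auto
  then obtain v where v: "v \<in> C" "d (par v) = Max ((d \<circ> par) ` C)" by auto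
  define p where "p = par v"
  have deepest: "d (par x) \<le> d p" if "x \<in> C" for x
    using that fin v(2) unfolding p_def C_def by (auto intro: Max_ge)
  \<comment> \<open>The children of \<open>p\<close> are leaves.\<close>
  have not_parent: "par x \<noteq> u" if "x \<in> C" "d p < d u" for x u
    using deepest[OF that(1)] that(2) by auto
  have p: "p \<in> W" "E v p" "d p < d v" using T'[OF v(1)] unfolding p_def by auto
  show ?thesis
  proof (cases "\<exists>v'\<in>C. v' \<noteq> v \<and> par v' = p")
    case True
    then obtain v' where v': "v' \<in> C" "v' \<noteq> v" "par v' = p" by blast
    have "E v p" "E p v'" "d p < d v'" using p T'[OF v'(1)] v'(3) sym by auto
    then have "close_block E {v, v'}" unfolding close_block_def by blast
    moreover have "rooted_parents E r par d (W - {v, v'})"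
      unfolding rooted_parents_def
      using T' not_parent \<open>d p < d v\<close> \<open>d p < d v'\<close> unfolding C_def by blast
    ultimately show ?thesis using that[of "{v, v'}"] v(1) v'(1,2) unfolding C_def by auto
  next
    case False
    have "close_block E {v, p}" unfolding close_block_def using \<open>E v p\<close> by blast
    moreover have "rooted_parents E r par d (W - {v, p})"
      unfolding rooted_parents_def
      using T' not_parent \<open>d p < d v\<close> False unfolding C_def by blast
    moreover have "p \<noteq> v" using \<open>d p < d v\<close> by blast
    ultimately show ?thesis using that[of "{v, p}"] v(1) p unfolding C_def by auto
  qed
qed

lemma rooted_parents_close_block_partition:
  assumes "finite W" "rooted_parents E r par d W" and sym: "\<And>x y. E x y \<Longrightarrow> E y x"
  shows "\<exists>P. partition_on W P \<and> (\<forall>M\<in>P. close_block E M) \<and> 2 * card P \<le> card W + 1"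
  using assms(1,2)
proof (induction "card W" arbitrary: W rule: less_induct)
  case less
  consider "W = {}" | a where "W = {a}" | "2 \<le> card W"
    using less.prems(1) by (metis One_nat_def card_1_singletonE card_eq_0_iff less_2_cases not_le)
  then show ?case
  proof cases
    case 1
    then show ?thesis by (intro exI[of _ "{}"]) (simp add: partition_on_empty)
  next
    case (2 a)
    then show ?thesis
      by (intro exI[of _ "{W}"]) (auto simp: partition_on_space close_block_def)
  next
    case 3
    obtain B where B: "B \<subseteq> W" "card B = 2" "close_block E B"
      "rooted_parents E r par d (W - B)"
      by (rule rooted_parents_remove_close_block[OF less.prems 3 sym])
    have card_rest: "card (W - B) + 2 = card W"
      using B(1,2) 3 less.prems(1) finite_subset[OF B(1)] by (simp add: card_Diff_subset)
    then obtain P where P: "partition_on (W - B) P" "\<forall>M\<in>P. close_block E M"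
      "2 * card P \<le> card (W - B) + 1"
      using less.hyps[of "W - B"] less.prems(1) B(4) by auto
    have "disjnt B (\<Union>P)" using partition_onD1[OF P(1)] by (auto simp: disjnt_def)
    then have "partition_on W (insert B P)"
      using partition_on_insert P(1) B(1,2) by (metis Diff_partition card.empty zero_neq_numeral)
    moreover have "card (insert B P) \<le> card P + 1"
      by (cases "finite P") (auto simp: card_insert_if)
    ultimately show ?thesis using P B(3) card_rest by (intro exI[of _ "insert B P"]) auto
  qed
qed

lemma dmv2_partition_half:
  assumes G: "graph V E" and "connected_graph V E"
  obtains P where "partition_on V P" "\<forall>M\<in>P. dmv2_set V E M" "2 * card P \<le> card V + 1"
proof -
  have "\<exists>r par d. rooted_parents E r par d V"
  proof (cases "V = {}")
    case True
    then show ?thesis by (simp add: rooted_parents_def)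
  next
    case False
    then obtain r where "r \<in> V" by blast
    with assms(2) show ?thesis by (metis connected_graph_rooted_parents)
  qed
  moreover have "finite V" "\<And>x y. E x y \<Longrightarrow> E y x" using G unfolding graph_def by blast+
  ultimately obtain P where P: "partition_on V P" "\<forall>M\<in>P. close_block E M" "2 * card P \<le> card V + 1"
    using rooted_parents_close_block_partition by metis
  have "\<forall>M\<in>P. dmv2_set V E M"
    using P(1,2) dmv2_set_close_block[OF G] partition_onD1 by blast
  with P show ?thesis using that by blast
qed

lemma dmv2_set_singleton: "x \<in> V \<Longrightarrow> dmv2_set V E {x}"
  unfolding dmv2_set_def by auto

lemma chi_mu2_le_card:
  assumes "partition_on V P" "\<forall>M\<in>P. dmv2_set V E M"
  shows "chi_mu2 V E \<le> card P"
  unfolding chi_mu2_def using assms by (intro Least_le) blast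

lemma chi_mu2_attained:
  obtains P where "partition_on V P" "\<forall>M\<in>P. dmv2_set V E M" "card P = chi_mu2 V E"
proof -
  have "partition_on V ((\<lambda>x. {x}) ` V)" by (rule partition_on_singletons)
  moreover have "\<forall>M\<in>(\<lambda>x. {x}) ` V. dmv2_set V E M" by (auto intro: dmv2_set_singleton)
  ultimately have "\<exists>k P. partition_on V P \<and> (\<forall>M\<in>P. dmv2_set V E M) \<and> card P = k"
    by blast
  then have "\<exists>P. partition_on V P \<and> (\<forall>M\<in>P. dmv2_set V E M) \<and> card P = chi_mu2 V E"
    unfolding chi_mu2_def by (rule LeastI_ex)
  then show ?thesis using that by blast
qed

lemma chi_mu2_connected_le:
  assumes "graph V E" "connected_graph V E"
  shows "2 * chi_mu2 V E \<le> card V + 1"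
proof -
  obtain P where P: "partition_on V P" "\<forall>M\<in>P. dmv2_set V E M" "2 * card P \<le> card V + 1"
    using dmv2_partition_half[OF assms] .
  have "chi_mu2 V E \<le> card P" using P(1,2) by (rule chi_mu2_le_card)
  with P(3) show ?thesis by linarith
qed

lemma card_le_mult_chi_mu2:
  assumes "\<And>M. dmv2_set V E M \<Longrightarrow> card M \<le> k"
  shows "card V \<le> k * chi_mu2 V E"
proof -
  obtain P where P: "partition_on V P" "\<forall>M\<in>P. dmv2_set V E M" "card P = chi_mu2 V E"
    by (rule chi_mu2_attained)
  have "card V = card (\<Union>P)" using partition_onD1[OF P(1)] by simp
  also have "\<dots> \<le> sum card P" by (rule card_Union_le_sum_card)
  also have "\<dots> \<le> of_nat (card P) * k"
    by (rule sum_bounded_above) (use P(2) assms in blast)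
  finally show ?thesis using P(3) by (simp add: mult.commute)
qed

definition path_graph :: "nat \<Rightarrow> nat \<Rightarrow> nat \<Rightarrow> bool" where
  "path_graph n i j \<longleftrightarrow> i < n \<and> j < n \<and> (j = Suc i \<or> i = Suc j)"

lemma graph_path_graph: "graph {0..<n} (path_graph n)"
  unfolding graph_def path_graph_def by auto

lemma is_path_rev:
  assumes "is_path V E p u v" and sym: "\<And>x y. E x y \<Longrightarrow> E y x"
  shows "is_path V E (rev p) v u"
proof -
  have "E (rev p ! i) (rev p ! Suc i)" if i: "Suc i < length p" for i
  proof -
    define j where "j = length p - Suc (Suc i)"
    have j: "Suc j < length p" "rev p ! i = p ! Suc j" "rev p ! Suc i = p ! j"
      using i unfolding j_def by (auto simp: rev_nth Suc_diff_Suc)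
    have "E (p ! j) (p ! Suc j)" using assms(1) j(1) unfolding is_path_def by blast
    then show ?thesis unfolding j(2,3) by (rule sym)
  qed
  then show ?thesis using assms(1) unfolding is_path_def by (auto simp: hd_rev last_rev)
qed

lemma is_path_path_graph_upt:
  assumes "u \<le> v" "v < n"
  shows "is_path {0..<n} (path_graph n) [u..<Suc v] u v"
  using assms unfolding is_path_def path_graph_def
  by (auto simp del: upt_Suc)

lemma connected_path_graph: "connected_graph {0..<n} (path_graph n)"
  unfolding connected_graph_def
proof (intro ballI)
  fix u v assume "u \<in> {0..<n}" "v \<in> {0..<n}"
  then consider "is_path {0..<n} (path_graph n) [u..<Suc v] u v"
    | "is_path {0..<n} (path_graph n) [v..<Suc u] v u"
    by (meson atLeastLessThan_iff is_path_path_graph_upt nat_le_linear)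
  then show "\<exists>p. is_path {0..<n} (path_graph n) p u v"
  proof cases
    case 1
    then show ?thesis by blast
  next
    case 2
    then have "is_path {0..<n} (path_graph n) (rev [v..<Suc u]) u v"
      by (rule is_path_rev) (auto simp: path_graph_def)
    then show ?thesis by blast
  qed
qed

lemma path_graph_short_path:
  assumes p: "is_path {0..<n} (path_graph n) p a c" and "a < c" "length p \<le> 3"
  shows "c \<le> a + 2 \<and> (c = a + 2 \<longrightarrow> a + 1 \<in> internal p)"
proof -
  consider x where "p = [x]" | x y where "p = [x, y]" | x y z where "p = [x, y, z]"
    using assms unfolding is_path_def by (cases p; cases "tl p"; cases "tl (tl p)") auto
  then show ?thesis
    using assms unfolding is_path_def path_graph_def internal_def
    by cases (auto simp: less_Suc_eq all_conj_distrib)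
qed

lemma path_graph_dmv2_card:
  assumes M: "dmv2_set {0..<n} (path_graph n) M"
  shows "card M \<le> 2"
proof (cases "M = {}")
  case False
  have fin: "finite M" using M finite_subset unfolding dmv2_set_def by blast
  define a where "a = Min M"
  have a: "a \<in> M" "\<And>c. c \<in> M \<Longrightarrow> a \<le> c" using fin False unfolding a_def by auto
  have near: "c \<le> a + 2 \<and> (c = a + 2 \<longrightarrow> a + 1 \<notin> M)" if c: "c \<in> M" "a < c" for c
  proof -
    obtain p where p: "geodesic {0..<n} (path_graph n) p a c" "length p - 1 \<le> 2"
      "internal p \<inter> M = {}"
      using M a(1) c unfolding dmv2_set_def by (metis less_irrefl)
    have "length p \<le> 3" using p(2) by linarith
    then show ?thesis
      using path_graph_short_path[of n p a c] p(1,3) c(2) unfolding geodesic_def by auto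
  qed
  have "M \<subseteq> {a, a + 1, a + 2}" using near a by force
  moreover have "\<not> {a, a + 1, a + 2} \<subseteq> M" using near[of "a + 2"] by auto
  ultimately have "card M < card {a, a + 1, a + 2}"
    by (intro psubset_card_mono) auto
  then show ?thesis by simp
qed simp

lemma chi_mu2_path_graph: "chi_mu2 {0..<n} (path_graph n) = (n + 1) div 2"
proof -
  have "2 * chi_mu2 {0..<n} (path_graph n) \<le> n + 1"
    using chi_mu2_connected_le[OF graph_path_graph connected_path_graph] by simp
  moreover have "n \<le> 2 * chi_mu2 {0..<n} (path_graph n)"
    using card_le_mult_chi_mu2[of "{0..<n}" "path_graph n" 2] path_graph_dmv2_card by simp
  ultimately show ?thesis by linarith
qed

lemma ceiling_half: "\<lceil>real n / 2\<rceil> = int ((n + 1) div 2)"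
  using ceiling_divide_eq_div[of "int n" 2, where 'a = real] by simp

theorem theorem3p1:
  shows "(\<forall>(V :: 'a set) E. graph V E \<and> connected_graph V E \<longrightarrow>
            real (chi_mu2 V E) \<le> real_of_int \<lceil>real (card V) / 2\<rceil>)
       \<and> (\<forall>n::nat. n \<ge> 1 \<longrightarrow> (\<exists>(V :: nat set) E. graph V E \<and> connected_graph V E \<and> card V = n
            \<and> real (chi_mu2 V E) = real_of_int \<lceil>real n / 2\<rceil>))"
proof (intro conjI allI impI)
  fix V :: "'a set" and E assume "graph V E \<and> connected_graph V E"
  then have "2 * chi_mu2 V E \<le> card V + 1" using chi_mu2_connected_le by blast
  then have "chi_mu2 V E \<le> (card V + 1) div 2" by linarith
  then show "real (chi_mu2 V E) \<le> real_of_int \<lceil>real (card V) / 2\<rceil>"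
    by (simp add: ceiling_half)
next
  fix n :: nat
  show "\<exists>(V :: nat set) E. graph V E \<and> connected_graph V E \<and> card V = n
          \<and> real (chi_mu2 V E) = real_of_int \<lceil>real n / 2\<rceil>"
    using graph_path_graph connected_path_graph chi_mu2_path_graph ceiling_half
    by (intro exI[of _ "{0..<n}"] exI[of _ "path_graph n"]) simp
qed

end
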